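(* Assume Assumptions 1 and 2 (stated in the context). If, during an iteration of Algorithm 1 (the feasible interior point method described in the context), the line search returns a positive step size $\alpha$ and $\theta$ is updated to $\theta+d\alpha$, then the updated $\theta$ is a feasible solution of the semi-infinite program, i.e. $\text{dist}(b_i(t,\theta),o)\ge d_0$ for all bodies $i$ and all $t\in[0,T]$.
   Context: Problem. An articulated robot consists of finitely many rigid bodies. For a finite-dimensional trajectory parameter vector $\theta$ and a time $t\in[0,T]$ ($T>0$), the $i$-th body occupies a set $b_i(t,\theta)\subset\mathbb{R}^3$; static obstacles occupy $o\subset\mathbb{R}^3$. $\text{dist}(A,B)$ denotes the shortest Euclidean distance between sets $A,B$. Given a safe distance $d_0\ge 0$ and a twice differentiable cost $\mathcal{O}(\theta)$, the semi-infinite program (SIP) is: minimize $\mathcal{O}(\theta)$ subject to $\text{dist}(b_i(t,\theta),o)\ge d_0$ for all $i$ and all $t\in[0,T]$. A $\theta$ satisfying all constraints is feasible. Assumption 1: there are finite decompositions $b_i(t,\theta)=\bigcup_j b_{ij}(t,\theta)$ and $o=\bigcup_k o_k$ such that for each triple $(i,j,k)$ the function $(t,\theta)\mapsto \text{dist}(b_{ij}(t,\theta),o_k)$ is sufficiently smooth. Assumption 2: the feasible domain of $t$ and $\theta$ is bounded. Under these, there is a constant $L_1$ with $|\text{dist}(b_{ij}(t_1,\theta),o_k)-\text{dist}(b_{ij}(t_2,\theta),o_k)|\le L_1|t_1-t_2|$ for all $i,j,k,t_1,t_2,\theta$; the algorithm uses such an $L_1$. Barrier: $\mathcal{P}$ is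 a sufficiently smooth, monotonically decreasing function on $(0,\infty)$ with $\lim_{x\to0}\mathcal{P}(x)=\infty$, $\lim_{x\to\infty}\mathcal{P}(x)=0$. Set $\mathcal{P}_{ijk}(t,\theta)=\mathcal{P}(\text{dist}(b_{ij}(t,\theta),o_k)-d_0)$. Partitions: for each triple $(i,j,k)$ the algorithm maintains a finite partition of $[0,T]$ into closed intervals $[T_0^l,T_1^l]$ indexed by $l$; "subdividing" the term $(i,j,k,l)$ replaces $[T_0^l,T_1^l]$ in the partition of $(i,j,k)$ by $[T_0^l,(T_0^l+T_1^l)/2]$ and $[(T_0^l+T_1^l)/2,T_1^l]$. Define $\mathcal{P}_{ijkl}(\theta)=\mathcal{P}_{ijk}((T_0^l+T_1^l)/2,\theta)$ and, for $\mu>0$, $\mathcal{E}(\theta)=\mathcal{O}(\theta)+\mu\sum_{ijkl}(T_1^l-T_0^l)\mathcal{P}_{ijkl}(\theta)$ (sum over all triples and all intervals of their partitions). Search directions: $d^{(1)}=-\nabla_\theta\mathcal{E}$, or $d^{(2)}=\mathcal{M}(\nabla^2_\theta\mathcal{E})^{-1}d^{(1)}$ where $\mathcal{M}$ satisfies $\underline\beta I\preceq\mathcal{M}(H)\preceq\bar\beta I$ for fixed positive constants $\underline\beta,\bar\beta$. Wolfe condition: $\mathcal{E}(\theta+d\alpha)\le\mathcal{E}(\theta)+c\langle d\alpha,\nabla_\theta\mathcal{E}(\theta)\rangle$ with fixed $c\in(0,1)$. Safety check (Algorithm 2) at $\theta$: with $\psi(x)=L_1x/2+L_2x^\eta$ ($L_2,\eta>0$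 constants), return some tuple $(i,j,k,l)$ with $\text{dist}(b_{ij}((T_0^l+T_1^l)/2,\theta),o_k)\le d_0+\psi(T_1^l-T_0^l)$ if one exists, else return None ("$\theta$ passes the safety check"). Line-Search($\theta,d,\epsilon_\alpha$) (Algorithm 3), with constants $\alpha_0>0,\gamma\in(0,1)$: set $\alpha=\alpha_0$, $\theta'=\theta+d\alpha$; while $\theta'$ fails the safety check or violates the Wolfe condition: if the safety check returned a tuple $(i,j,k,l)$, then if $\alpha\le\epsilon_\alpha$ set $\epsilon_\alpha\leftarrow\gamma\epsilon_\alpha$, subdivide $(i,j,k,l)$, re-evaluate $\mathcal{E}$ and recompute $d$ (as $d^{(1)}$ or $d^{(2)}$), otherwise set $\alpha\leftarrow\gamma\alpha$; if only the Wolfe condition fails set $\alpha\leftarrow\gamma\alpha$; then update $\theta'=\theta+d\alpha$ and re-run the safety check. Return $\alpha,\epsilon_\alpha$. Algorithm 1: input a feasible $\theta$, initial $\mu$, $\epsilon_\alpha,\epsilon_d,\epsilon_\mu>0$, $\gamma\in(0,1)$. While $\mu>\epsilon_\mu$: compute $d$; while $\|d\|_\infty>\epsilon_d$: $(\alpha,\epsilon_\alpha)\leftarrow$ Line-Search$(\theta,d,\epsilon_\alpha)$, $\theta\leftarrow\theta+d\alpha$, recompute $d$; then $\mu\leftarrow\gamma\mu$. Return $\theta$. *)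

theory Defs
  imports "HOL-Analysis.Analysis"
begin

text \<open>Partitions: for every triple (i,j,k) a finite set of closed intervals,
  each interval [T0,T1] represented by the pair (T0,T1).  Terms (i,j,k,l) of the
  penalty are represented by (i,j,k,T0,T1).\<close>

type_synonym ('i,'j,'k) partition = "'i \<Rightarrow> 'j \<Rightarrow> 'k \<Rightarrow> (real \<times> real) set"

definition valid_partition ::
  "'i set \<Rightarrow> ('i \<Rightarrow> 'j set) \<Rightarrow> 'k set \<Rightarrow> real \<Rightarrow> ('i,'j,'k) partition \<Rightarrow> bool" where
  "valid_partition I J K T P \<longleftrightarrow>
     (\<forall>i\<in>I. \<forall>j\<in>J i. \<forall>k\<in>K.
        finite (P i j k) \<and>
        (\<forall>(a,b)\<in>P i j k. 0 \<le> a \<and> a \<le> b \<and> b \<le> T) \<and>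
        (\<Union>(a,b)\<in>P i j k. {a..b}) = {0..T})"

definition subdivide ::
  "('i,'j,'k) partition \<Rightarrow> 'i \<times> 'j \<times> 'k \<times> real \<times> real \<Rightarrow> ('i,'j,'k) partition" where
  "subdivide P tup = (case tup of (i,j,k,a,b) \<Rightarrow>
     (\<lambda>i' j' k'. if (i',j',k') = (i,j,k)
        then (P i j k - {(a,b)}) \<union> {(a,(a+b)/2), ((a+b)/2,b)}
        else P i' j' k'))"

definition psi :: "real \<Rightarrow> real \<Rightarrow> real \<Rightarrow> real \<Rightarrow> real" where
  "psi L1 L2 \<eta> x = L1 * x / 2 + L2 * x powr \<eta>"

text \<open>The tuples that the safety check (Algorithm 2) may return at \<theta>;
  the check returns None iff this set is empty.\<close>
definition unsafe_tuples ::
  "'i set \<Rightarrow> ('i \<Rightarrow> 'j set) \<Rightarrow> 'k set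
   \<Rightarrow> ('i \<Rightarrow> 'j \<Rightarrow> real \<Rightarrow> 'p \<Rightarrow> (real^3) set) \<Rightarrow> ('k \<Rightarrow> (real^3) set)
   \<Rightarrow> real \<Rightarrow> real \<Rightarrow> real \<Rightarrow> real
   \<Rightarrow> ('i,'j,'k) partition \<Rightarrow> 'p \<Rightarrow> ('i \<times> 'j \<times> 'k \<times> real \<times> real) set" where
  "unsafe_tuples I J K b ob d0 L1 L2 \<eta> P \<theta> =
     {(i,j,k,a,b'). i \<in> I \<and> j \<in> J i \<and> k \<in> K \<and> (a,b') \<in> P i j k \<and>
        setdist (b i j ((a+b')/2) \<theta>) (ob k) \<le> d0 + psi L1 L2 \<eta> (b' - a)}"

text \<open>Line search (Algorithm 3) as a big-step relation.
  \<open>ls_run U dir W \<gamma> \<theta> \<alpha> \<epsilon> P d \<alpha>' \<epsilon>' P' d'\<close>: the while loop started in state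
  (\<alpha>, \<epsilon>, partitions P, direction d) terminates in state (\<alpha>', \<epsilon>', P', d').
  U P \<theta>' = set of tuples the safety check may return at \<theta>' (empty = pass);
  dir P = recomputed search direction after re-evaluating E for partitions P;
  W P d \<alpha> = Wolfe condition for the step \<theta> + \<alpha> d w.r.t. the E of partitions P.\<close>
inductive ls_run ::
  "(('i,'j,'k) partition \<Rightarrow> 'p \<Rightarrow> ('i \<times> 'j \<times> 'k \<times> real \<times> real) set)
   \<Rightarrow> (('i,'j,'k) partition \<Rightarrow> 'p) \<Rightarrow> (('i,'j,'k) partition \<Rightarrow> 'p \<Rightarrow> real \<Rightarrow> bool)
   \<Rightarrow> real \<Rightarrow> 'p::real_normed_vector
   \<Rightarrow> real \<Rightarrow> real \<Rightarrow> ('i,'j,'k) partition \<Rightarrow> 'p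
   \<Rightarrow> real \<Rightarrow> real \<Rightarrow> ('i,'j,'k) partition \<Rightarrow> 'p \<Rightarrow> bool"
  for U dir W \<gamma> \<theta> where
  ret: "U P (\<theta> + \<alpha> *\<^sub>R d) = {} \<Longrightarrow> W P d \<alpha> \<Longrightarrow>
        ls_run U dir W \<gamma> \<theta> \<alpha> \<epsilon> P d \<alpha> \<epsilon> P d"
| subdiv: "tup \<in> U P (\<theta> + \<alpha> *\<^sub>R d) \<Longrightarrow> \<alpha> \<le> \<epsilon> \<Longrightarrow>
        ls_run U dir W \<gamma> \<theta> \<alpha> (\<gamma> * \<epsilon>) (subdivide P tup) (dir (subdivide P tup)) \<alpha>' \<epsilon>' P' d' \<Longrightarrow>
        ls_run U dir W \<gamma> \<theta> \<alpha> \<epsilon> P d \<alpha>' \<epsilon>' P' d'"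
| shrink_unsafe: "tup \<in> U P (\<theta> + \<alpha> *\<^sub>R d) \<Longrightarrow> \<not> \<alpha> \<le> \<epsilon> \<Longrightarrow>
        ls_run U dir W \<gamma> \<theta> (\<gamma> * \<alpha>) \<epsilon> P d \<alpha>' \<epsilon>' P' d' \<Longrightarrow>
        ls_run U dir W \<gamma> \<theta> \<alpha> \<epsilon> P d \<alpha>' \<epsilon>' P' d'"
| shrink_wolfe: "U P (\<theta> + \<alpha> *\<^sub>R d) = {} \<Longrightarrow> \<not> W P d \<alpha> \<Longrightarrow>
        ls_run U dir W \<gamma> \<theta> (\<gamma> * \<alpha>) \<epsilon> P d \<alpha>' \<epsilon>' P' d' \<Longrightarrow>
        ls_run U dir W \<gamma> \<theta> \<alpha> \<epsilon> P d \<alpha>' \<epsilon>' P' d'"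

definition feasible ::
  "'i set \<Rightarrow> ('i \<Rightarrow> real \<Rightarrow> 'p \<Rightarrow> (real^3) set) \<Rightarrow> (real^3) set \<Rightarrow> real \<Rightarrow> real \<Rightarrow> 'p \<Rightarrow> bool" where
  "feasible I B Obs T d0 \<theta> \<longleftrightarrow> (\<forall>i\<in>I. \<forall>t\<in>{0..T}. setdist (B i t \<theta>) Obs \<ge> d0)"

end

theory Submission
  imports Defs
begin

text \<open>Whatever step the line search returns, the trial point passed the safety check for the
  final partitions, which still cover \<open>[0,T]\<close>. On an interval \<open>[a,c]\<close> the midpoint distance
  exceeds \<open>d0 + L1 (c - a)/2\<close>, and the Lipschitz bound in \<open>t\<close> loses at most \<open>L1 (c - a)/2\<close>
  on the way to any \<open>t \<in> [a,c]\<close>; so every piece of every body stays farther than \<open>d0\<close> from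
  every piece of the obstacles, hence so do the unions.\<close>

lemma valid_partition_subdivide:
  assumes valid: "valid_partition I J K T P"
    and ijk: "i \<in> I" "j \<in> J i" "k \<in> K" and mem: "(a, c) \<in> P i j k"
  shows "valid_partition I J K T (subdivide P (i, j, k, a, c))"
proof -
  let ?m = "(a + c) / 2"
  let ?S = "(P i j k - {(a, c)}) \<union> {(a, ?m), (?m, c)}"
  have ac: "0 \<le> a" "a \<le> c" "c \<le> T"
    using valid ijk mem unfolding valid_partition_def by fastforce+
  have cover: "(\<Union>(x, y)\<in>P i j k. {x..y}) = {0..T}"
    using valid ijk unfolding valid_partition_def by blast
  have "{a..?m} \<union> {?m..c} = {a..c}"
    using ac by auto
  then have "(\<Union>(x, y)\<in>?S. {x..y}) = (\<Union>(x, y)\<in>P i j k. {x..y})"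
    using mem by blast
  with cover have "(\<Union>(x, y)\<in>?S. {x..y}) = {0..T}"
    by simp
  moreover have "\<forall>(x, y)\<in>?S. 0 \<le> x \<and> x \<le> y \<and> y \<le> T"
    using valid ijk ac unfolding valid_partition_def by auto
  ultimately show ?thesis
    using valid unfolding valid_partition_def subdivide_def by auto
qed

lemma ls_run_returns_safe:
  assumes "ls_run U dir W \<gamma> \<theta> \<alpha> \<epsilon> P d \<alpha>' \<epsilon>' P' d'"
    and "\<And>P tup \<theta>'. tup \<in> U P \<theta>' \<Longrightarrow> Q P \<Longrightarrow> Q (subdivide P tup)"
    and "Q P"
  shows "Q P' \<and> U P' (\<theta> + \<alpha>' *\<^sub>R d') = {}"
  using assms by (induction rule: ls_run.induct) auto

lemma psi_ge_linear_part: "L2 \<ge> 0 \<Longrightarrow> L1 * x / 2 \<le> psi L1 L2 \<eta> x"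
  unfolding psi_def by simp

lemma Lipschitz_midpoint_margin:
  fixes f :: "real \<Rightarrow> real"
  assumes "\<bar>f t - f ((a + c) / 2)\<bar> \<le> L * \<bar>t - (a + c) / 2\<bar>" and "0 \<le> L"
    and "a \<le> t" "t \<le> c" and "f ((a + c) / 2) > d + L * (c - a) / 2"
  shows "f t > d"
proof -
  have "\<bar>t - (a + c) / 2\<bar> \<le> (c - a) / 2"
    using \<open>a \<le> t\<close> \<open>t \<le> c\<close> by (simp add: abs_le_iff field_simps)
  then have "L * \<bar>t - (a + c) / 2\<bar> \<le> L * (c - a) / 2"
    using mult_left_mono[OF _ \<open>0 \<le> L\<close>] by fastforce
  then show ?thesis
    using assms(1,5) by linarith
qed

lemma safe_partition_imp_setdist_gt:
  assumes valid: "valid_partition I J K T P"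
    and safe: "unsafe_tuples I J K b ob d0 L1 L2 \<eta> P \<theta> = {}"
    and lip: "\<And>t1 t2. \<bar>setdist (b i j t1 \<theta>) (ob k) - setdist (b i j t2 \<theta>) (ob k)\<bar> \<le> L1 * \<bar>t1 - t2\<bar>"
    and L2: "L2 \<ge> 0"
    and ijk: "i \<in> I" "j \<in> J i" "k \<in> K" and t: "t \<in> {0..T}"
  shows "setdist (b i j t \<theta>) (ob k) > d0"
proof -
  have "t \<in> (\<Union>(x, y)\<in>P i j k. {x..y})"
    using valid ijk t unfolding valid_partition_def by blast
  then obtain a c where ac: "(a, c) \<in> P i j k" "a \<le> t" "t \<le> c"
    by auto
  have "0 \<le> L1"
    using order_trans[OF abs_ge_zero lip[of 0 1]] by simp
  have "(i, j, k, a, c) \<notin> unsafe_tuples I J K b ob d0 L1 L2 \<eta> P \<theta>"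
    using safe by blast
  then have "setdist (b i j ((a + c) / 2) \<theta>) (ob k) > d0 + psi L1 L2 \<eta> (c - a)"
    using ijk ac(1) unfolding unsafe_tuples_def by simp
  with psi_ge_linear_part[OF L2, of L1 "c - a" \<eta>]
  have "setdist (b i j ((a + c) / 2) \<theta>) (ob k) > d0 + L1 * (c - a) / 2"
    by linarith
  with lip \<open>0 \<le> L1\<close> ac(2,3) show ?thesis
    by (rule Lipschitz_midpoint_margin)
qed

lemma setdist_UN_UN_ge:
  fixes A :: "'j \<Rightarrow> 'a::metric_space set" and C :: "'k \<Rightarrow> 'a set"
  assumes "J \<noteq> {}" "K \<noteq> {}" "0 \<le> d"
    and sep: "\<And>j k. j \<in> J \<Longrightarrow> k \<in> K \<Longrightarrow> d < setdist (A j) (C k)"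
  shows "d \<le> setdist (\<Union>j\<in>J. A j) (\<Union>k\<in>K. C k)"
proof (rule le_setdistI)
  obtain j k where jk: "j \<in> J" "k \<in> K"
    using assms(1,2) by blast
  have "A j \<noteq> {}" "C k \<noteq> {}"
    using sep[OF jk] \<open>0 \<le> d\<close> by auto
  with jk show "(\<Union>j\<in>J. A j) \<noteq> {}" "(\<Union>k\<in>K. C k) \<noteq> {}"
    by auto
next
  fix x y
  assume "x \<in> (\<Union>j\<in>J. A j)" "y \<in> (\<Union>k\<in>K. C k)"
  then obtain j k where "j \<in> J" "x \<in> A j" "k \<in> K" "y \<in> C k"
    by blast
  then show "d \<le> dist x y"
    using sep setdist_le_dist by (meson less_imp_le order_trans)
qed

theorem theorem1:
  fixes I :: "'i set" and J :: "'i \<Rightarrow> 'j set" and K :: "'k set"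
    and B :: "'i \<Rightarrow> real \<Rightarrow> 'p::real_normed_vector \<Rightarrow> (real^3) set"
    and b :: "'i \<Rightarrow> 'j \<Rightarrow> real \<Rightarrow> 'p \<Rightarrow> (real^3) set"
    and Obs :: "(real^3) set" and ob :: "'k \<Rightarrow> (real^3) set"
    and T d0 L1 L2 \<eta> \<gamma> \<alpha>0 \<epsilon> \<alpha> \<epsilon>' :: real
    and P P' :: "('i,'j,'k) partition"
    and \<theta> d d' :: 'p
    and dir :: "('i,'j,'k) partition \<Rightarrow> 'p"
    and W :: "('i,'j,'k) partition \<Rightarrow> 'p \<Rightarrow> real \<Rightarrow> bool"
  assumes fin: "finite I" "\<And>i. i \<in> I \<Longrightarrow> finite (J i) \<and> J i \<noteq> {}" "finite K" "K \<noteq> {}"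
    and decomp_body: "\<And>i t th. i \<in> I \<Longrightarrow> B i t th = (\<Union>j\<in>J i. b i j t th)"
    and decomp_obst: "Obs = (\<Union>k\<in>K. ob k)"
    and lip: "\<And>i j k t1 t2 th. i \<in> I \<Longrightarrow> j \<in> J i \<Longrightarrow> k \<in> K \<Longrightarrow>
       \<bar>setdist (b i j t1 th) (ob k) - setdist (b i j t2 th) (ob k)\<bar> \<le> L1 * \<bar>t1 - t2\<bar>"
    and T_pos: "T > 0" and d0: "d0 \<ge> 0" and L2: "L2 > 0" and eta: "\<eta> > 0"
    and gamma: "0 < \<gamma>" "\<gamma> < 1" and alpha0: "\<alpha>0 > 0" and eps: "\<epsilon> > 0"
    and part: "valid_partition I J K T P"
    and run: "ls_run (unsafe_tuples I J K b ob d0 L1 L2 \<eta>) dir W \<gamma> \<theta> \<alpha>0 \<epsilon> P d \<alpha> \<epsilon>' P' d'"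
    and alpha_pos: "\<alpha> > 0"
  shows "feasible I B Obs T d0 (\<theta> + \<alpha> *\<^sub>R d')"
proof -
  have "valid_partition I J K T P' \<and> unsafe_tuples I J K b ob d0 L1 L2 \<eta> P' (\<theta> + \<alpha> *\<^sub>R d') = {}"
    using run _ part
  proof (rule ls_run_returns_safe)
    show "valid_partition I J K T (subdivide Q tup)"
      if "tup \<in> unsafe_tuples I J K b ob d0 L1 L2 \<eta> Q \<theta>'" "valid_partition I J K T Q" for Q tup \<theta>'
      using that valid_partition_subdivide unfolding unsafe_tuples_def by fastforce
  qed
  then have pieces_apart: "d0 < setdist (b i j t (\<theta> + \<alpha> *\<^sub>R d')) (ob k)"
    if "i \<in> I" "j \<in> J i" "k \<in> K" "t \<in> {0..T}" for i j k t
    using that lip[OF that(1-3)] L2 by (blast intro: safe_partition_imp_setdist_gt less_imp_le)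
  have "d0 \<le> setdist (B i t (\<theta> + \<alpha> *\<^sub>R d')) Obs" if "i \<in> I" "t \<in> {0..T}" for i t
    unfolding decomp_body[OF that(1)] decomp_obst
    using conjunct2[OF fin(2)[OF that(1)]] fin(4) d0 pieces_apart[OF that(1) _ _ that(2)] by (rule setdist_UN_UN_ge)
  then show ?thesis
    unfolding feasible_def by blast
qed

end
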